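(* Every ternary cubic form whose zero locus in $\mathbb{P}^2$ is a cuspidal cubic curve has an apolar star configuration $\mathbb{X}(4)$.
   Context: Let $S=\mathbb{C}[x_0,x_1,x_2]$ and $T=\mathbb{C}[y_0,y_1,y_2]$, where $T$ acts on $S$ by differentiation, $y_j=\partial/\partial x_j$. For a form $F\in S$, $F^\perp=\{\partial\in T:\partial F=0\}$. A finite set of points $\mathbb{X}\subset\mathbb{P}^2=\mathbb{P}(S_1)$ with defining ideal $I(\mathbb{X})\subseteq T$ is apolar to $F$ if $I(\mathbb{X})\subseteq F^\perp$. A star configuration $\mathbb{X}(4)\subset\mathbb{P}^2$: take $4$ linear forms $l_1,\dots,l_4\in T_1$ such that any $3$ of them are linearly independent; $\mathbb{X}(4)$ is the set of $6$ pairwise intersection points of the lines $\{l_i=0\}$. *)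

theory Defs
  imports "HOL-Analysis.Analysis" "HOL-Library.Poly_Mapping"
          "HOL-Computational_Algebra.Factorial_Ring"
begin

text \<open>The same type is used for S = C[x0,x1,x2] and for T = C[y0,y1,y2].\<close>

type_synonym poly3 = "(nat^3) \<Rightarrow>\<^sub>0 complex"

definition mdeg :: "nat^3 \<Rightarrow> nat" where
  "mdeg m = (\<Sum>i\<in>UNIV. m $ i)"

definition homogeneous3 :: "nat \<Rightarrow> poly3 \<Rightarrow> bool" where
  "homogeneous3 d P \<longleftrightarrow> (\<forall>m\<in>Poly_Mapping.keys P. mdeg m = d)"

definition cubic_form :: "poly3 \<Rightarrow> bool" where
  "cubic_form F \<longleftrightarrow> F \<noteq> 0 \<and> homogeneous3 3 F"

definition eval3 :: "poly3 \<Rightarrow> complex^3 \<Rightarrow> complex" where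
  "eval3 P p = (\<Sum>m\<in>Poly_Mapping.keys P. Poly_Mapping.lookup P m * (\<Prod>i\<in>UNIV. (p $ i) ^ (m $ i)))"

definition hcomp :: "nat \<Rightarrow> poly3 \<Rightarrow> poly3" where
  "hcomp d P = Abs_poly_mapping (\<lambda>m. if mdeg m = d then Poly_Mapping.lookup P m else 0)"

text \<open>Action of T on S by differentiation, y_j = d/dx_j:
  y^a applied to x^(a+c) gives prod_i (a_i+c_i)!/c_i! x^c.\<close>
definition dcoeff :: "nat^3 \<Rightarrow> nat^3 \<Rightarrow> nat" where
  "dcoeff a c = (\<Prod>i\<in>UNIV. fact (a $ i + c $ i) div fact (c $ i))"

definition act :: "poly3 \<Rightarrow> poly3 \<Rightarrow> poly3" where
  "act G F = Abs_poly_mapping (\<lambda>c. \<Sum>a\<in>Poly_Mapping.keys G. Poly_Mapping.lookup G a * Poly_Mapping.lookup F (a + c) * of_nat (dcoeff a c))"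

definition perp :: "poly3 \<Rightarrow> poly3 set" where
  "perp F = {G. act G F = 0}"

definition lin3 :: "complex^3 \<Rightarrow> complex^3 \<Rightarrow> complex" where
  "lin3 l v = (\<Sum>i\<in>UNIV. l $ i * v $ i)"

definition e3 :: "3 \<Rightarrow> nat^3" where
  "e3 i = (\<chi> k. if k = i then 1 else 0)"

definition pd :: "3 \<Rightarrow> poly3 \<Rightarrow> poly3" where
  "pd i F = act (Poly_Mapping.single (e3 i) 1) F"

definition pd2 :: "3 \<Rightarrow> 3 \<Rightarrow> poly3 \<Rightarrow> poly3" where
  "pd2 i j F = act (Poly_Mapping.single (e3 i + e3 j) 1) F"

text \<open>Cuspidal cubic: an irreducible cubic form with a singular point p whose tangent
  cone (quadratic part of the Taylor expansion at p) is a double line.\<close>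
definition cuspidal_cubic :: "poly3 \<Rightarrow> bool" where
  "cuspidal_cubic F \<longleftrightarrow> cubic_form F \<and> irreducible F \<and>
     (\<exists>p::complex^3. p \<noteq> 0 \<and> eval3 F p = 0 \<and> (\<forall>i. eval3 (pd i F) p = 0) \<and>
        (\<exists>l::complex^3. l \<noteq> 0 \<and>
           (\<forall>v::complex^3. (\<Sum>i\<in>UNIV. \<Sum>j\<in>UNIV. eval3 (pd2 i j F) p * v $ i * v $ j)
                             = (lin3 l v)^2)))"

text \<open>Vanishing ideal (in T) of a set of points given by a cone X of representatives.\<close>
definition ideal_of :: "(complex^3) set \<Rightarrow> poly3 set" where
  "ideal_of X = {G. \<forall>d. \<forall>p\<in>X. eval3 (hcomp d G) p = 0}"

definition apolar :: "(complex^3) set \<Rightarrow> poly3 \<Rightarrow> bool" where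
  "apolar X F \<longleftrightarrow> ideal_of X \<subseteq> perp F"

definition lin_indep3 :: "complex^3 \<Rightarrow> complex^3 \<Rightarrow> complex^3 \<Rightarrow> bool" where
  "lin_indep3 u v w \<longleftrightarrow>
     (\<forall>a b c::complex. a *s u + b *s v + c *s w = 0 \<longrightarrow> a = 0 \<and> b = 0 \<and> c = 0)"

definition star_forms :: "(nat \<Rightarrow> complex^3) \<Rightarrow> bool" where
  "star_forms l \<longleftrightarrow> (\<forall>i j k. i < 4 \<and> j < 4 \<and> k < 4 \<and> i \<noteq> j \<and> j \<noteq> k \<and> i \<noteq> k
                         \<longrightarrow> lin_indep3 (l i) (l j) (l k))"

text \<open>X(4): the pairwise intersection points of the lines {l_i = 0}, as the set of all
  nonzero representatives in C^3 (the affine cone).\<close>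
definition star_points :: "(nat \<Rightarrow> complex^3) \<Rightarrow> (complex^3) set" where
  "star_points l = {p. p \<noteq> 0 \<and> (\<exists>i j. i < j \<and> j < 4 \<and> lin3 (l i) p = 0 \<and> lin3 (l j) p = 0)}"

end

theory Submission
  imports Defs
begin

(* Let p be the cusp of F, l its tangent line form and \<Phi> the polar (symmetric trilinear) form
   of F. The conditions at p say \<Phi>(p,u,v) = l(u) l(v)/6 and l(p) = 0. In coordinates x = l, y, z
   dual to a frame (b1, b2, p) this leaves F = x^2 z/2 + (binary cubic in x, y); irreducibility
   makes the y^3 coefficient d nonzero, and completing the cube gives F = x^2 z/2 + d y^3 for
   independent linear forms x, y, z. Now x^2 z/2 = ((x + z)^3 - (x - z)^3 - 2 z^3)/12, so F is a
   sum of cubes of x + z, x - z, z and y. Each of these four points is the intersection of two of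
   the lines h1, h1 - h3, h1 + h2 + h3, h2, where h is the frame dual to (x, y, z), so they lie in
   the star configuration X(4) of these lines; and a sum of cubes of points of X is annihilated by
   every form vanishing on X. *)

declare One_nat_def[simp del]

definition vec3 :: "'a \<Rightarrow> 'a \<Rightarrow> 'a \<Rightarrow> 'a^3" where
  "vec3 x y z = (\<chi> i. if i = 1 then x else if i = 2 then y else z)"

lemma vec3_nth [simp]: "vec3 x y z $ 1 = x" "vec3 x y z $ 2 = y" "vec3 x y z $ 3 = z"
  by (simp_all add: vec3_def)

lemma vec3_eta: "vec3 (x$1) (x$2) (x$3) = x"
  by (simp add: vec_eq_iff forall_3)

lemma vec3_eq_iff [simp]: "vec3 a b c = vec3 a' b' c' \<longleftrightarrow> a = a' \<and> b = b' \<and> c = c'"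
  by (auto simp: vec_eq_iff forall_3)

lemma vec3_cases: obtains a b c where "x = vec3 a b c"
  using that[of "x $ 1" "x $ 2" "x $ 3"] by (simp add: vec3_eta)

lemma vec3_add [simp]: "vec3 a b c + vec3 a' b' c' = vec3 (a + a') (b + b') (c + c')"
  by (simp add: vec_eq_iff forall_3)

lemma prod_UNIV_3: "prod f (UNIV::3 set) = f 1 * f 2 * f 3"
  unfolding UNIV_3 by (simp add: ac_simps)

lemma e3_eq_vec3 [simp]: "e3 1 = vec3 1 0 0" "e3 2 = vec3 0 1 0" "e3 3 = vec3 0 0 1"
  by (simp_all add: e3_def vec_eq_iff forall_3)

lemma mdeg_vec3 [simp]: "mdeg (vec3 a b c) = a + b + c"
  by (simp add: mdeg_def sum_3)

lemma mdeg_add: "mdeg (a + b) = mdeg a + mdeg b"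
  by (simp add: mdeg_def sum.distrib)

lemma mdeg_e3 [simp]: "mdeg (e3 i) = 1"
  using exhaust_3[of i] by (elim disjE) simp_all

lemma finite_mdeg_eq: "finite {m. mdeg m = k}"
proof (rule finite_subset)
  show "{m. mdeg m = k} \<subseteq> (\<lambda>(a, b, c). vec3 a b c) ` ({..k} \<times> {..k} \<times> {..k})"
  proof
    fix m
    assume "m \<in> {m. mdeg m = k}"
    then show "m \<in> (\<lambda>(a, b, c). vec3 a b c) ` ({..k} \<times> {..k} \<times> {..k})"
      by (cases m rule: vec3_cases) (force simp: image_iff)
  qed
qed simp

lemma monomials_of_degree:
  assumes "\<And>a b c. a + b + c = d \<longleftrightarrow> vec3 a b c \<in> M"
  shows "{m. mdeg m = d} = M"
proof (rule set_eqI)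
  fix m :: "nat^3"
  show "m \<in> {m. mdeg m = d} \<longleftrightarrow> m \<in> M"
    using assms by (cases m rule: vec3_cases) simp
qed

lemma monomials_degree_1: "{m. mdeg m = 1} = {vec3 1 0 0, vec3 0 1 0, vec3 0 0 1}"
proof -
  have "a + b + c = 1 \<longleftrightarrow> vec3 a b c \<in> {vec3 1 0 0, vec3 0 1 0, vec3 0 0 1}" for a b c :: nat
    by (cases a; cases b; cases c) (auto simp: numeral_eq_Suc)
  then show ?thesis
    by (rule monomials_of_degree)
qed

lemma monomials_degree_2:
  "{m. mdeg m = 2} = {vec3 2 0 0, vec3 0 2 0, vec3 0 0 2, vec3 1 1 0, vec3 1 0 1, vec3 0 1 1}"
proof -
  have "a + b + c = 2 \<longleftrightarrow>
        vec3 a b c \<in> {vec3 2 0 0, vec3 0 2 0, vec3 0 0 2, vec3 1 1 0, vec3 1 0 1, vec3 0 1 1}"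
    for a b c :: nat
    by (cases a; cases b; cases c) (auto simp: numeral_eq_Suc)
  then show ?thesis
    by (rule monomials_of_degree)
qed

lemma monomials_degree_3:
  "{m. mdeg m = 3} = {vec3 3 0 0, vec3 0 3 0, vec3 0 0 3, vec3 2 1 0, vec3 2 0 1,
                      vec3 1 2 0, vec3 0 2 1, vec3 1 0 2, vec3 0 1 2, vec3 1 1 1}"
proof -
  have "a + b + c = 3 \<longleftrightarrow> vec3 a b c \<in> {vec3 3 0 0, vec3 0 3 0, vec3 0 0 3, vec3 2 1 0, vec3 2 0 1,
                                    vec3 1 2 0, vec3 0 2 1, vec3 1 0 2, vec3 0 1 2, vec3 1 1 1}"
    for a b c :: nat
    by (cases a; cases b; cases c) (auto simp: numeral_eq_Suc)
  then show ?thesis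
    by (rule monomials_of_degree)
qed

definition monomial_value :: "complex^3 \<Rightarrow> nat^3 \<Rightarrow> complex" where
  "monomial_value v m = (\<Prod>i\<in>UNIV. (v $ i) ^ (m $ i))"

lemma monomial_value_add: "monomial_value v (a + b) = monomial_value v a * monomial_value v b"
  by (simp add: monomial_value_def power_add prod.distrib)

lemma monomial_value_vec3 [simp]: "monomial_value v (vec3 a b c) = v$1^a * v$2^b * v$3^c"
  by (simp add: monomial_value_def prod_UNIV_3)

lemma eval3_eq_sum_superset:
  assumes "finite K" "Poly_Mapping.keys P \<subseteq> K"
  shows "eval3 P v = (\<Sum>m\<in>K. Poly_Mapping.lookup P m * monomial_value v m)"
  unfolding eval3_def monomial_value_def
  by (rule sum.mono_neutral_left) (use assms in \<open>auto simp: in_keys_iff\<close>)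

lemma eval3_zero [simp]: "eval3 0 v = 0"
  by (simp add: eval3_def)

lemma eval3_single: "eval3 (Poly_Mapping.single a c) v = c * monomial_value v a"
  by (subst eval3_eq_sum_superset[of "{a}"]) auto

lemma eval3_one: "eval3 1 v = 1"
  using eval3_single[of 0 1 v] by (simp add: monomial_value_def)

lemma eval3_add: "eval3 (P + Q) v = eval3 P v + eval3 Q v"
proof -
  let ?K = "Poly_Mapping.keys P \<union> Poly_Mapping.keys Q"
  have "eval3 (P + Q) v = (\<Sum>m\<in>?K. Poly_Mapping.lookup (P + Q) m * monomial_value v m)"
    by (rule eval3_eq_sum_superset) (auto simp: keys_add)
  also have "\<dots> = (\<Sum>m\<in>?K. Poly_Mapping.lookup P m * monomial_value v m)
                 + (\<Sum>m\<in>?K. Poly_Mapping.lookup Q m * monomial_value v m)"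
    by (simp add: lookup_add distrib_right sum.distrib)
  also have "\<dots> = eval3 P v + eval3 Q v"
    by (simp add: eval3_eq_sum_superset[symmetric])
  finally show ?thesis .
qed

lemma eval3_uminus: "eval3 (- P) v = - eval3 P v"
  by (simp add: eval3_def sum_negf)

lemma eval3_diff: "eval3 (P - Q) v = eval3 P v - eval3 Q v"
  using eval3_add[of P "- Q" v] by (simp add: eval3_uminus)

lemma poly_mapping_single_induct:
  fixes f :: "'a::zero \<Rightarrow>\<^sub>0 'b::ab_group_add"
  assumes "P 0" and "\<And>a c f. P f \<Longrightarrow> P (Poly_Mapping.single a c + f)"
  shows "P f"
proof (induction "card (Poly_Mapping.keys f)" arbitrary: f)
  case 0
  then show ?case using assms(1) by simp
next
  case (Suc n)
  then obtain a where a: "a \<in> Poly_Mapping.keys f"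
    by (metis card.empty ex_in_conv nat.distinct(1))
  define g where "g = f - Poly_Mapping.single a (Poly_Mapping.lookup f a)"
  have "Poly_Mapping.keys g = Poly_Mapping.keys f - {a}"
    by (auto simp: g_def in_keys_iff lookup_minus lookup_single when_def split: if_splits)
  then have "P g"
    using Suc a by simp
  then have "P (Poly_Mapping.single a (Poly_Mapping.lookup f a) + g)"
    by (rule assms(2))
  then show ?case
    by (simp add: g_def)
qed

lemma eval3_mult: "eval3 (P * Q) v = eval3 P v * eval3 Q v"
proof (induction P rule: poly_mapping_single_induct)
  case (2 a c f)
  have "eval3 (Poly_Mapping.single a c * Q) v = c * monomial_value v a * eval3 Q v"
    by (induction Q rule: poly_mapping_single_induct)
      (simp_all add: distrib_left eval3_add mult_single eval3_single monomial_value_add algebra_simps)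
  then show ?case
    using 2 by (simp add: distrib_right eval3_add eval3_single)
qed simp

lemma keys_homogeneous3: "homogeneous3 d P \<Longrightarrow> Poly_Mapping.keys P \<subseteq> {m. mdeg m = d}"
  by (auto simp: homogeneous3_def)

lemma homogeneous3_single: "mdeg m = d \<Longrightarrow> homogeneous3 d (Poly_Mapping.single m c)"
  by (simp add: homogeneous3_def)

lemma homogeneous3_add: "homogeneous3 d P \<Longrightarrow> homogeneous3 d Q \<Longrightarrow> homogeneous3 d (P + Q)"
  unfolding homogeneous3_def using keys_add[of P Q] by blast

lemma homogeneous3_mult:
  assumes "homogeneous3 i P" "homogeneous3 j Q"
  shows "homogeneous3 (i + j) (P * Q)"
  unfolding homogeneous3_def
proof
  fix m
  assume "m \<in> Poly_Mapping.keys (P * Q)"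
  then obtain a b where "m = a + b" "a \<in> Poly_Mapping.keys P" "b \<in> Poly_Mapping.keys Q"
    using keys_mult[of P Q] by blast
  then show "mdeg m = i + j"
    using assms by (simp add: homogeneous3_def mdeg_add)
qed

lemma eval3_homogeneous_at_0:
  assumes "homogeneous3 d P" "d > 0"
  shows "eval3 P 0 = 0"
  unfolding eval3_def
proof (rule sum.neutral, intro ballI)
  fix m
  assume "m \<in> Poly_Mapping.keys P"
  then have "mdeg m \<noteq> 0"
    using assms by (simp add: homogeneous3_def)
  then obtain i where "m $ i \<noteq> 0"
    by (auto simp: mdeg_def)
  then have "(\<Prod>i\<in>UNIV. ((0::complex^3) $ i) ^ (m $ i)) = 0"
    by (intro prod_zero) auto
  then show "Poly_Mapping.lookup P m * (\<Prod>i\<in>UNIV. ((0::complex^3) $ i) ^ (m $ i)) = 0"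
    by simp
qed

lemma homogeneous3_not_unit:
  assumes "homogeneous3 d P" "d > 0"
  shows "\<not> P dvd 1"
proof
  assume "P dvd 1"
  then obtain k where "1 = P * k"
    by (elim dvdE)
  then have "eval3 1 0 = eval3 P 0 * eval3 k 0"
    by (metis eval3_mult)
  then show False
    by (simp add: eval3_one eval3_homogeneous_at_0[OF assms])
qed

section \<open>The differentiation action\<close>

lemma finite_add_left_vimage: "finite K \<Longrightarrow> finite {c::nat^3. e + c \<in> K}"
  using finite_vimageI[of K "\<lambda>c. e + c"] by (simp add: inj_def vimage_def)

lemma lookup_act:
  "Poly_Mapping.lookup (act G F) c =
     (\<Sum>a\<in>Poly_Mapping.keys G. Poly_Mapping.lookup G a * Poly_Mapping.lookup F (a + c) * of_nat (dcoeff a c))"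
proof -
  let ?f = "\<lambda>c. \<Sum>a\<in>Poly_Mapping.keys G.
              Poly_Mapping.lookup G a * Poly_Mapping.lookup F (a + c) * of_nat (dcoeff a c)"
  have "{c. ?f c \<noteq> 0} \<subseteq> (\<Union>a\<in>Poly_Mapping.keys G. {c. a + c \<in> Poly_Mapping.keys F})"
  proof
    fix c
    assume "c \<in> {c. ?f c \<noteq> 0}"
    then obtain a where "a \<in> Poly_Mapping.keys G"
      and "Poly_Mapping.lookup G a * Poly_Mapping.lookup F (a + c) * of_nat (dcoeff a c) \<noteq> 0"
      by (auto elim: sum.not_neutral_contains_not_neutral)
    then show "c \<in> (\<Union>a\<in>Poly_Mapping.keys G. {c. a + c \<in> Poly_Mapping.keys F})"
      by (auto simp: in_keys_iff)
  qed
  then have "finite {c. ?f c \<noteq> 0}"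
    by (rule finite_subset) (simp add: finite_add_left_vimage)
  then show ?thesis
    unfolding act_def by simp
qed

lemma lookup_act_single:
  "Poly_Mapping.lookup (act (Poly_Mapping.single e 1) F) c = Poly_Mapping.lookup F (e + c) * of_nat (dcoeff e c)"
  by (simp add: lookup_act)

lemma act_add_right: "act G (F1 + F2) = act G F1 + act G F2"
  by (rule poly_mapping_eqI) (simp add: lookup_act lookup_add distrib_left distrib_right sum.distrib)

lemma dcoeff_vec3 [simp]:
  "dcoeff (vec3 a b c) (vec3 a' b' c') =
     (fact (a + a') div fact a') * (fact (b + b') div fact b') * (fact (c + c') div fact c')"
  by (simp add: dcoeff_def prod_UNIV_3)

lemma fact_3 [simp]: "fact 3 = (6::'a::semiring_char_0)"
  by (simp add: fact_numeral)

lemma eval3_act_single_homogeneous: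
  assumes "homogeneous3 d F" and "mdeg e + k = d"
  shows "eval3 (act (Poly_Mapping.single e 1) F) p =
     (\<Sum>c\<in>{c. mdeg c = k}. Poly_Mapping.lookup F (e + c) * of_nat (dcoeff e c) * monomial_value p c)"
proof -
  have "Poly_Mapping.keys (act (Poly_Mapping.single e 1) F) \<subseteq> {c. mdeg c = k}"
  proof
    fix c
    assume "c \<in> Poly_Mapping.keys (act (Poly_Mapping.single e 1) F)"
    then have "e + c \<in> Poly_Mapping.keys F"
      by (auto simp: in_keys_iff lookup_act_single)
    then have "mdeg (e + c) = d"
      using assms(1) by (simp add: homogeneous3_def)
    then show "c \<in> {c. mdeg c = k}"
      using assms(2) by (simp add: mdeg_add)
  qed
  then show ?thesis
    by (simp add: eval3_eq_sum_superset[OF finite_mdeg_eq] lookup_act_single)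
qed

section \<open>Cubic forms and their polar forms\<close>

definition cubic_value :: "(nat^3 \<Rightarrow> complex) \<Rightarrow> complex^3 \<Rightarrow> complex" where
  "cubic_value a v =
     a (vec3 3 0 0) * v$1^3 + a (vec3 0 3 0) * v$2^3 + a (vec3 0 0 3) * v$3^3
   + a (vec3 2 1 0) * v$1^2 * v$2 + a (vec3 2 0 1) * v$1^2 * v$3 + a (vec3 1 2 0) * v$1 * v$2^2
   + a (vec3 0 2 1) * v$2^2 * v$3 + a (vec3 1 0 2) * v$1 * v$3^2 + a (vec3 0 1 2) * v$2 * v$3^2
   + a (vec3 1 1 1) * v$1 * v$2 * v$3"

lemma eval3_cubic:
  assumes "homogeneous3 3 P"
  shows "eval3 P v = cubic_value (Poly_Mapping.lookup P) v"
  using eval3_eq_sum_superset[OF finite_mdeg_eq keys_homogeneous3[OF assms]]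
  by (simp add: monomials_degree_3 cubic_value_def algebra_simps)

lemma cubic_value_eq_0_imp_coeffs_0:
  assumes "\<And>v. cubic_value a v = 0" and "mdeg m = 3"
  shows "a m = 0"
proof -
  have val: "cubic_value a (vec3 x y z) = 0" for x y z
    using assms(1) by blast
  have pure: "a (vec3 3 0 0) = 0" "a (vec3 0 3 0) = 0" "a (vec3 0 0 3) = 0"
    using val[of 1 0 0] val[of 0 1 0] val[of 0 0 1] by (simp_all add: cubic_value_def)
  have mixed: "a (vec3 2 1 0) = 0" "a (vec3 1 2 0) = 0" "a (vec3 2 0 1) = 0"
    "a (vec3 1 0 2) = 0" "a (vec3 0 2 1) = 0" "a (vec3 0 1 2) = 0"
    using val[of 1 1 0] val[of 1 "-1" 0] val[of 1 0 1] val[of 1 0 "-1"] val[of 0 1 1] val[of 0 1 "-1"]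
    by (simp_all add: cubic_value_def pure)
  have central: "a (vec3 1 1 1) = 0"
    using val[of 1 1 1] by (simp add: cubic_value_def pure mixed)
  from assms(2) have "m \<in> {m. mdeg m = 3}"
    by simp
  then show ?thesis
    unfolding monomials_degree_3 by (elim insertE) (simp_all add: pure mixed central)
qed

lemma homogeneous3_cubic_eqI:
  assumes "homogeneous3 3 P" "homogeneous3 3 Q" and "\<And>v. eval3 P v = eval3 Q v"
  shows "P = Q"
proof -
  have hom: "homogeneous3 3 (P - Q)"
    using assms(1,2) keys_diff[of P Q] by (auto simp: homogeneous3_def)
  have "cubic_value (Poly_Mapping.lookup (P - Q)) v = 0" for v
    using assms(3)[of v] by (simp add: eval3_cubic[OF hom, symmetric] eval3_diff)
  then have "Poly_Mapping.lookup (P - Q) m = 0" for m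
    using hom cubic_value_eq_0_imp_coeffs_0 by (fastforce simp: homogeneous3_def in_keys_iff)
  then show ?thesis
    by (metis poly_mapping_eqI lookup_zero right_minus_eq)
qed

definition polar :: "(nat^3 \<Rightarrow> complex) \<Rightarrow> complex^3 \<Rightarrow> complex^3 \<Rightarrow> complex^3 \<Rightarrow> complex" where
  "polar a u v w =
     a (vec3 3 0 0) * u$1 * v$1 * w$1 + a (vec3 0 3 0) * u$2 * v$2 * w$2
   + a (vec3 0 0 3) * u$3 * v$3 * w$3
   + a (vec3 2 1 0) / 3 * (u$1 * v$1 * w$2 + u$1 * v$2 * w$1 + u$2 * v$1 * w$1)
   + a (vec3 2 0 1) / 3 * (u$1 * v$1 * w$3 + u$1 * v$3 * w$1 + u$3 * v$1 * w$1)
   + a (vec3 1 2 0) / 3 * (u$1 * v$2 * w$2 + u$2 * v$1 * w$2 + u$2 * v$2 * w$1)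
   + a (vec3 0 2 1) / 3 * (u$2 * v$2 * w$3 + u$2 * v$3 * w$2 + u$3 * v$2 * w$2)
   + a (vec3 1 0 2) / 3 * (u$1 * v$3 * w$3 + u$3 * v$1 * w$3 + u$3 * v$3 * w$1)
   + a (vec3 0 1 2) / 3 * (u$2 * v$3 * w$3 + u$3 * v$2 * w$3 + u$3 * v$3 * w$2)
   + a (vec3 1 1 1) / 6 * (u$1 * v$2 * w$3 + u$1 * v$3 * w$2 + u$2 * v$1 * w$3
                           + u$2 * v$3 * w$1 + u$3 * v$1 * w$2 + u$3 * v$2 * w$1)"

lemma cubic_value_eq_polar: "cubic_value a v = polar a v v v"
  by (simp add: cubic_value_def polar_def field_simps power2_eq_square power3_eq_cube)

lemma polar_commute_12: "polar a u v w = polar a v u w"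
  and polar_commute_23: "polar a u v w = polar a u w v"
  by (simp_all add: polar_def algebra_simps)

lemma polar_add_1: "polar a (u + u') v w = polar a u v w + polar a u' v w"
  and polar_scale_1: "polar a (c *s u) v w = c * polar a u v w"
  by (simp_all add: polar_def algebra_simps)

lemma polar_add_2: "polar a v (u + u') w = polar a v u w + polar a v u' w"
  and polar_add_3: "polar a v w (u + u') = polar a v w u + polar a v w u'"
  and polar_scale_2: "polar a v (c *s u) w = c * polar a v u w"
  and polar_scale_3: "polar a v w (c *s u) = c * polar a v w u"
  by (metis polar_add_1 polar_scale_1 polar_commute_12 polar_commute_23)+

lemmas polar_linear =
  polar_add_1 polar_add_2 polar_add_3 polar_scale_1 polar_scale_2 polar_scale_3

lemma polar_axis_expand:
  "polar a u v w = w$1 * polar a u v (axis 1 1) + w$2 * polar a u v (axis 2 1) + w$3 * polar a u v (axis 3 1)"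
  by (simp add: polar_def axis_def algebra_simps)

lemma polar_cube_expand:
  "polar a (x *s u + y *s v + z *s w) (x *s u + y *s v + z *s w) (x *s u + y *s v + z *s w) =
     x^3 * polar a u u u + y^3 * polar a v v v + z^3 * polar a w w w
   + 3 * x^2 * y * polar a u u v + 3 * x^2 * z * polar a u u w + 3 * x * y^2 * polar a u v v
   + 3 * y^2 * z * polar a v v w + 3 * x * z^2 * polar a u w w + 3 * y * z^2 * polar a v w w
   + 6 * x * y * z * polar a u v w"
proof -
  have sym: "polar a u v u = polar a u u v" "polar a v u u = polar a u u v"
     "polar a u w u = polar a u u w" "polar a w u u = polar a u u w"
     "polar a v u v = polar a u v v" "polar a v v u = polar a u v v"
     "polar a v w v = polar a v v w" "polar a w v v = polar a v v w"
     "polar a w u w = polar a u w w" "polar a w w u = polar a u w w"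
     "polar a w v w = polar a v w w" "polar a w w v = polar a v w w"
     "polar a u w v = polar a u v w" "polar a v u w = polar a u v w" "polar a v w u = polar a u v w"
     "polar a w u v = polar a u v w" "polar a w v u = polar a u v w"
    by (metis polar_commute_12 polar_commute_23)+
  show ?thesis
    by (simp only: polar_linear sym) (simp add: algebra_simps power2_eq_square power3_eq_cube)
qed

lemma eval3_pd:
  assumes "homogeneous3 3 F"
  shows "eval3 (pd i F) p = 3 * polar (Poly_Mapping.lookup F) p p (axis i 1)"
  using eval3_act_single_homogeneous[OF assms, of "e3 i" 2 p] exhaust_3[of i]
  by (elim disjE) (simp_all add: pd_def monomials_degree_2 polar_def axis_def field_simps
                     power2_eq_square numeral_2_eq_2[symmetric])

lemma eval3_pd2:
  assumes "homogeneous3 3 F"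
  shows "eval3 (pd2 i j F) p = 6 * polar (Poly_Mapping.lookup F) p (axis i 1) (axis j 1)"
  using eval3_act_single_homogeneous[OF assms, of "e3 i + e3 j" 1 p] exhaust_3[of i] exhaust_3[of j]
  by (elim disjE) (simp_all add: pd2_def mdeg_add monomials_degree_1 polar_def axis_def field_simps
                     power2_eq_square numeral_2_eq_2[symmetric])

lemma hessian_form_eq_polar:
  assumes "homogeneous3 3 F"
  shows "(\<Sum>i\<in>UNIV. \<Sum>j\<in>UNIV. eval3 (pd2 i j F) p * v $ i * v $ j) =
           6 * polar (Poly_Mapping.lookup F) p v v"
  by (simp add: eval3_pd2[OF assms] sum_3 polar_def axis_def field_simps)

lemma lin3_expand: "lin3 u v = u$1 * v$1 + u$2 * v$2 + u$3 * v$3"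
  by (simp add: lin3_def sum_3)

lemma lin3_commute: "lin3 u v = lin3 v u"
  by (simp add: lin3_expand algebra_simps)

lemma lin3_add_left: "lin3 (u + u') v = lin3 u v + lin3 u' v"
  and lin3_add_right: "lin3 v (u + u') = lin3 v u + lin3 v u'"
  and lin3_diff_left: "lin3 (u - u') v = lin3 u v - lin3 u' v"
  and lin3_diff_right: "lin3 v (u - u') = lin3 v u - lin3 v u'"
  and lin3_scale_left: "lin3 (c *s u) v = c * lin3 u v"
  and lin3_scale_right: "lin3 v (c *s u) = c * lin3 v u"
  and lin3_zero_right: "lin3 v 0 = 0"
  by (simp_all add: lin3_expand algebra_simps)

lemmas lin3_linear =
  lin3_add_left lin3_add_right lin3_diff_left lin3_diff_right lin3_scale_left lin3_scale_right

definition cnj_vec :: "complex^3 \<Rightarrow> complex^3" where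
  "cnj_vec x = (\<chi> i. cnj (x $ i))"

lemma lin3_cnj_vec_nonzero:
  assumes "x \<noteq> 0"
  shows "lin3 x (cnj_vec x) \<noteq> 0"
proof -
  have "lin3 x (cnj_vec x) = of_real ((norm (x$1))\<^sup>2 + (norm (x$2))\<^sup>2 + (norm (x$3))\<^sup>2)"
    by (simp only: lin3_expand cnj_vec_def vec_lambda_beta complex_norm_square of_real_add)
  moreover have "x$1 \<noteq> 0 \<or> x$2 \<noteq> 0 \<or> x$3 \<noteq> 0"
    using assms by (auto simp: vec_eq_iff forall_3)
  then have "(norm (x$1))\<^sup>2 + (norm (x$2))\<^sup>2 + (norm (x$3))\<^sup>2 > 0"
    by (auto simp: add_pos_nonneg add_nonneg_pos)
  ultimately show ?thesis
    by (metis of_real_eq_0_iff less_irrefl)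
qed

definition cross :: "complex^3 \<Rightarrow> complex^3 \<Rightarrow> complex^3" where
  "cross u v = vec3 (u$2 * v$3 - u$3 * v$2) (u$3 * v$1 - u$1 * v$3) (u$1 * v$2 - u$2 * v$1)"

definition det3 :: "complex^3 \<Rightarrow> complex^3 \<Rightarrow> complex^3 \<Rightarrow> complex" where
  "det3 u v w = lin3 u (cross v w)"

lemma lin3_cross:
  "lin3 (cross v w) u = det3 u v w" "lin3 (cross v w) v = 0" "lin3 (cross v w) w = 0"
  by (simp_all add: det3_def cross_def lin3_expand algebra_simps)

lemma det3_cyclic: "det3 v w u = det3 u v w"
  by (simp add: det3_def cross_def lin3_expand algebra_simps)

lemma det3_cross_cross: "det3 (cross v w) (cross w u) (cross u v) = (det3 u v w)\<^sup>2"
  by (simp add: det3_def cross_def lin3_expand power2_eq_square) algebra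

lemma det3_cross_middle: "det3 x (cross l y) z = lin3 x y * lin3 l z - lin3 x l * lin3 y z"
  by (simp add: det3_def lin3_expand cross_def algebra_simps)

lemma det3_scale: "det3 (a *s u) (b *s v) (c *s w) = a * b * c * det3 u v w"
  by (simp add: det3_def cross_def lin3_expand algebra_simps)

lemma det3_vec3_lincomb:
  "det3 (x1 *s u + x2 *s v + x3 *s w) (y1 *s u + y2 *s v + y3 *s w) (z1 *s u + z2 *s v + z3 *s w)
   = det3 (vec3 x1 x2 x3) (vec3 y1 y2 y3) (vec3 z1 z2 z3) * det3 u v w"
  by (simp add: det3_def cross_def lin3_expand algebra_simps)

lemma lin_indep3_if_det3_nonzero:
  assumes "det3 u v w \<noteq> 0"
  shows "lin_indep3 u v w"
  unfolding lin_indep3_def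
proof (intro allI impI)
  fix a b c :: complex
  assume "a *s u + b *s v + c *s w = 0"
  then have "lin3 (cross v w) (a *s u + b *s v + c *s w) = 0"
    "lin3 (cross w u) (a *s u + b *s v + c *s w) = 0"
    "lin3 (cross u v) (a *s u + b *s v + c *s w) = 0"
    by (simp_all add: lin3_zero_right)
  then have "a * det3 u v w = 0" "b * det3 u v w = 0" "c * det3 u v w = 0"
    using lin3_cross[of v w] lin3_cross[of w u] lin3_cross[of u v]
    by (simp_all add: lin3_linear det3_cyclic)
  then show "a = 0 \<and> b = 0 \<and> c = 0"
    using assms by simp
qed

lemma dual_basis:
  assumes "det3 u v w \<noteq> 0"
  obtains u' v' w' where
    "lin3 u' u = 1" "lin3 u' v = 0" "lin3 u' w = 0"
    "lin3 v' u = 0" "lin3 v' v = 1" "lin3 v' w = 0"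
    "lin3 w' u = 0" "lin3 w' v = 0" "lin3 w' w = 1"
    "det3 u' v' w' \<noteq> 0"
    "\<And>x. x = lin3 u' x *s u + lin3 v' x *s v + lin3 w' x *s w"
proof
  define D where "D = det3 u v w"
  have D: "D \<noteq> 0"
    using assms by (simp add: D_def)
  let ?u' = "(1 / D) *s cross v w" and ?v' = "(1 / D) *s cross w u" and ?w' = "(1 / D) *s cross u v"
  show "lin3 ?u' u = 1" "lin3 ?u' v = 0" "lin3 ?u' w = 0"
    "lin3 ?v' u = 0" "lin3 ?v' v = 1" "lin3 ?v' w = 0"
    "lin3 ?w' u = 0" "lin3 ?w' v = 0" "lin3 ?w' w = 1"
    using D lin3_cross[of v w] lin3_cross[of w u] lin3_cross[of u v]
    by (simp_all add: lin3_scale_left D_def det3_cyclic)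
  have "det3 ?u' ?v' ?w' = (1 / D) ^ 3 * D\<^sup>2"
    by (simp add: det3_scale det3_cross_cross D_def power3_eq_cube)
  then show "det3 ?u' ?v' ?w' \<noteq> 0"
    using D by simp
  fix x
  have "D * x $ i = lin3 (cross v w) x * u $ i + lin3 (cross w u) x * v $ i + lin3 (cross u v) x * w $ i"
    for i
    using exhaust_3[of i]
    by (elim disjE) (simp_all add: D_def det3_def cross_def lin3_expand algebra_simps)
  then show "x = lin3 ?u' x *s u + lin3 ?v' x *s v + lin3 ?w' x *s w"
    using D by (simp add: vec_eq_iff lin3_scale_left field_simps)
qed

definition linear_poly :: "complex^3 \<Rightarrow> poly3" where
  "linear_poly d = Poly_Mapping.single (vec3 1 0 0) (d$1) + Poly_Mapping.single (vec3 0 1 0) (d$2)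
                 + Poly_Mapping.single (vec3 0 0 1) (d$3)"

lemma eval3_linear_poly: "eval3 (linear_poly d) v = lin3 d v"
  by (simp add: linear_poly_def eval3_add eval3_single lin3_expand)

lemma homogeneous3_linear_poly: "homogeneous3 1 (linear_poly d)"
  by (simp add: linear_poly_def homogeneous3_add homogeneous3_single)

lemma not_irreducible_cubic_with_linear_factor:
  assumes "homogeneous3 3 F"
    and "\<And>v. eval3 F v = lin3 d v * (lin3 w1 v * lin3 w2 v + lin3 w3 v * lin3 w4 v)"
  shows "\<not> irreducible F"
proof
  assume irr: "irreducible F"
  let ?Q = "linear_poly w1 * linear_poly w2 + linear_poly w3 * linear_poly w4"
  have hom_Q: "homogeneous3 2 ?Q"
    using homogeneous3_add homogeneous3_mult[OF homogeneous3_linear_poly homogeneous3_linear_poly]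
    by (metis one_add_one)
  have "F = linear_poly d * ?Q"
  proof (rule homogeneous3_cubic_eqI[OF assms(1)])
    show "homogeneous3 3 (linear_poly d * ?Q)"
      using homogeneous3_mult[OF homogeneous3_linear_poly hom_Q] by simp
  qed (simp add: assms(2) eval3_mult eval3_add eval3_linear_poly)
  then have "linear_poly d dvd 1 \<or> ?Q dvd 1"
    using irr irreducibleD by blast
  then show False
    using homogeneous3_not_unit[OF homogeneous3_linear_poly] homogeneous3_not_unit[OF hom_Q] by auto
qed

section \<open>Apolarity and the star configuration\<close>

definition mfact :: "nat^3 \<Rightarrow> complex" where
  "mfact m = (\<Prod>i\<in>UNIV. fact (m $ i))"

lemma mfact_nonzero: "mfact m \<noteq> 0"
  by (simp add: mfact_def)

lemma of_nat_dcoeff: "of_nat (dcoeff a c) = mfact (a + c) / mfact c"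
proof -
  have "of_nat (fact (a $ i + c $ i) div fact (c $ i)) =
        (fact (a $ i + c $ i) / fact (c $ i) :: complex)" for i
    using fact_dvd[of "c $ i" "a $ i + c $ i", where 'a = nat]
    by (simp add: field_char_0_class.of_nat_div dvd_imp_mod_0)
  then show ?thesis
    by (simp add: dcoeff_def mfact_def prod_dividef[symmetric] of_nat_prod)
qed

definition power_form :: "nat \<Rightarrow> complex \<Rightarrow> complex^3 \<Rightarrow> poly3" where
  "power_form d w q =
     Abs_poly_mapping (\<lambda>m. if mdeg m = d then w * fact d / mfact m * monomial_value q m else 0)"

lemma lookup_power_form:
  "Poly_Mapping.lookup (power_form d w q) m =
     (if mdeg m = d then w * fact d / mfact m * monomial_value q m else 0)"
proof -
  have "finite {m. (if mdeg m = d then w * fact d / mfact m * monomial_value q m else 0) \<noteq> 0}"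
    by (rule finite_subset[OF _ finite_mdeg_eq[of d]]) auto
  then show ?thesis
    by (simp add: power_form_def)
qed

lemma homogeneous3_power_form: "homogeneous3 d (power_form d w q)"
  by (auto simp: homogeneous3_def in_keys_iff lookup_power_form split: if_splits)

lemma eval3_power_form_3: "eval3 (power_form 3 w q) v = w * (lin3 q v)^3"
  unfolding eval3_cubic[OF homogeneous3_power_form] lookup_power_form
  by (simp add: cubic_value_def mfact_def prod_UNIV_3 lin3_expand numeral_2_eq_2[symmetric]) algebra

lemma lookup_hcomp:
  "Poly_Mapping.lookup (hcomp d G) a = (if mdeg a = d then Poly_Mapping.lookup G a else 0)"
proof -
  have "finite {a. (if mdeg a = d then Poly_Mapping.lookup G a else 0) \<noteq> 0}"
    by (rule finite_subset[OF _ finite_keys[of G]]) (simp add: in_keys_iff subset_iff)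
  then show ?thesis
    by (simp add: hcomp_def)
qed

lemma keys_hcomp: "Poly_Mapping.keys (hcomp d G) \<subseteq> Poly_Mapping.keys G"
  by (auto simp: in_keys_iff lookup_hcomp split: if_splits)

text \<open>Applying \<open>G\<close> to the power form \<open>w (q \<cdot> x)\<^sup>d\<close>, the coefficient of \<open>x\<^sup>c\<close> is a multiple of
  \<open>G\<^sub>k(q)\<close>, where \<open>G\<^sub>k\<close> is the homogeneous component of \<open>G\<close> of degree \<open>k = d - |c|\<close>.\<close>
lemma act_power_form_eq_0:
  assumes "q \<in> X" and "G \<in> ideal_of X"
  shows "act G (power_form d w q) = 0"
proof (rule poly_mapping_eqI)
  fix c
  define K where "K = (if mdeg c \<le> d then w * fact d / mfact c * monomial_value q c else 0)"
  have summand: "Poly_Mapping.lookup G a * Poly_Mapping.lookup (power_form d w q) (a + c) * of_nat (dcoeff a c)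
      = K * (Poly_Mapping.lookup (hcomp (d - mdeg c) G) a * monomial_value q a)" for a
  proof (cases "mdeg a + mdeg c = d")
    case True
    then show ?thesis
      using mfact_nonzero[of "a + c"] mfact_nonzero[of c]
      by (simp add: K_def lookup_power_form lookup_hcomp mdeg_add monomial_value_add of_nat_dcoeff)
  next
    case False
    then show ?thesis
      by (auto simp: K_def lookup_power_form lookup_hcomp mdeg_add)
  qed
  have "Poly_Mapping.lookup (act G (power_form d w q)) c =
      K * (\<Sum>a\<in>Poly_Mapping.keys G. Poly_Mapping.lookup (hcomp (d - mdeg c) G) a * monomial_value q a)"
    by (simp add: lookup_act summand sum_distrib_left)
  also have "\<dots> = K * eval3 (hcomp (d - mdeg c) G) q"
    by (simp add: eval3_eq_sum_superset[OF finite_keys keys_hcomp])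
  also have "\<dots> = 0"
    using assms by (simp add: ideal_of_def)
  finally show "Poly_Mapping.lookup (act G (power_form d w q)) c = Poly_Mapping.lookup 0 c"
    by simp
qed

lemma apolar_power_form: "q \<in> X \<Longrightarrow> apolar X (power_form d w q)"
  by (auto simp: apolar_def perp_def act_power_form_eq_0)

lemma apolar_add: "apolar X F1 \<Longrightarrow> apolar X F2 \<Longrightarrow> apolar X (F1 + F2)"
  by (auto simp: apolar_def perp_def act_add_right subset_iff)

lemma star_configuration_through_frame:
  assumes "det3 g1 g2 g3 \<noteq> 0"
  obtains l where "star_forms l"
    and "g1 + g3 \<in> star_points l" "g1 - g3 \<in> star_points l" "g3 \<in> star_points l" "g2 \<in> star_points l"
proof -
  obtain h1 h2 h3 where
    dual: "lin3 h1 g1 = 1" "lin3 h1 g2 = 0" "lin3 h1 g3 = 0"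
    "lin3 h2 g1 = 0" "lin3 h2 g2 = 1" "lin3 h2 g3 = 0"
    "lin3 h3 g1 = 0" "lin3 h3 g2 = 0" "lin3 h3 g3 = 1"
    and det_h: "det3 h1 h2 h3 \<noteq> 0"
    using dual_basis[OF assms] by metis
  define coeff :: "nat \<Rightarrow> complex^3" where
    "coeff i = [vec3 1 0 0, vec3 1 0 (-1), vec3 1 1 1, vec3 0 1 0] ! i" for i
  define l where "l i = coeff i $ 1 *s h1 + coeff i $ 2 *s h2 + coeff i $ 3 *s h3" for i
  have l_simps: "l 0 = h1" "l 1 = h1 - h3" "l 2 = h1 + h2 + h3" "l 3 = h2"
    by (simp_all add: l_def coeff_def vec_eq_iff)
  have det_coeff: "det3 (coeff i) (coeff j) (coeff k) \<noteq> 0"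
    if "i < 4" "j < 4" "k < 4" "i \<noteq> j" "j \<noteq> k" "i \<noteq> k" for i j k
  proof -
    have "i \<in> {0, 1, 2, 3}" "j \<in> {0, 1, 2, 3}" "k \<in> {0, 1, 2, 3}"
      using that by auto
    then show ?thesis
      using that by (elim insertE emptyE) (simp_all add: coeff_def det3_def cross_def lin3_expand)
  qed
  have on_lines: "q \<in> star_points l"
    if "i < j" "j < 4" "lin3 (l i) q = 0" "lin3 (l j) q = 0"
      and "lin3 h1 q \<noteq> 0 \<or> lin3 h2 q \<noteq> 0 \<or> lin3 h3 q \<noteq> 0" for i j q
    using that unfolding star_points_def by (auto simp: lin3_zero_right)
  have "star_forms l"
    using det_coeff det_h
    by (auto simp: star_forms_def l_def det3_vec3_lincomb vec3_eta intro!: lin_indep3_if_det3_nonzero)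
  moreover have "g1 + g3 \<in> star_points l"
    by (rule on_lines[of 1 3]) (simp_all add: l_simps lin3_linear dual)
  moreover have "g1 - g3 \<in> star_points l"
    by (rule on_lines[of 2 3]) (simp_all add: l_simps lin3_linear dual)
  moreover have "g3 \<in> star_points l"
    by (rule on_lines[of 0 3]) (simp_all add: l_simps lin3_linear dual)
  moreover have "g2 \<in> star_points l"
    by (rule on_lines[of 0 1]) (simp_all add: l_simps lin3_linear dual)
  ultimately show ?thesis
    using that by blast
qed

section \<open>Normal form of a cuspidal cubic\<close>

lemma cusp_polar:
  assumes hom: "homogeneous3 3 F"
    and grad: "\<forall>i. eval3 (pd i F) p = 0"
    and hess: "\<forall>v. (\<Sum>i\<in>UNIV. \<Sum>j\<in>UNIV. eval3 (pd2 i j F) p * v $ i * v $ j) = (lin3 l v)\<^sup>2"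
    and "l \<noteq> 0"
  shows "polar (Poly_Mapping.lookup F) p u v = lin3 l u * lin3 l v / 6" and "lin3 l p = 0"
proof -
  let ?a = "Poly_Mapping.lookup F"
  have square: "6 * polar ?a p u u = (lin3 l u)\<^sup>2" for u
    using hess hessian_form_eq_polar[OF hom, of p u] by simp
  have polarization: "polar ?a p u v = lin3 l u * lin3 l v / 6" for u v
  proof -
    have "6 * polar ?a p (u + v) (u + v) = (lin3 l (u + v))\<^sup>2"
      by (rule square)
    then have "6 * polar ?a p u u + 12 * polar ?a p u v + 6 * polar ?a p v v = (lin3 l u + lin3 l v)\<^sup>2"
      by (simp add: polar_add_2 polar_add_3 lin3_add_right polar_commute_23[of ?a p v u] algebra_simps)
    then show ?thesis
      using square[of u] square[of v] by (simp add: power2_eq_square) algebra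
  qed
  then show "polar ?a p u v = lin3 l u * lin3 l v / 6" .
  have "polar ?a p p (axis i 1) = 0" for i
    using grad eval3_pd[OF hom, of i p] by simp
  then have "polar ?a p p w = 0" for w
    by (simp add: polar_axis_expand[of ?a p p w])
  from this[of "cnj_vec l"] show "lin3 l p = 0"
    using lin3_cnj_vec_nonzero[OF \<open>l \<noteq> 0\<close>] polarization[of p "cnj_vec l"] by simp
qed

lemma cusp_coordinates:
  assumes hom: "homogeneous3 3 F"
    and polar_p: "\<And>u v. polar (Poly_Mapping.lookup F) p u v = lin3 l u * lin3 l v / 6"
    and "lin3 l p = 0" "l \<noteq> 0" "p \<noteq> 0"
  obtains x y z A B C D where "det3 x y z \<noteq> 0"
    and "\<And>v. eval3 F v = (lin3 x v)\<^sup>2 * lin3 z v / 2 + A * (lin3 x v)^3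
        + 3 * B * (lin3 x v)\<^sup>2 * lin3 y v + 3 * C * lin3 x v * (lin3 y v)\<^sup>2 + D * (lin3 y v)^3"
proof -
  let ?a = "Poly_Mapping.lookup F"
  define b1 where "b1 = (1 / lin3 l (cnj_vec l)) *s cnj_vec l"
  define b2 where "b2 = cross l (cnj_vec p)"
  have l_b1: "lin3 l b1 = 1"
    using lin3_cnj_vec_nonzero[OF \<open>l \<noteq> 0\<close>] by (simp add: b1_def lin3_scale_right)
  have l_b2: "lin3 l b2 = 0"
    using lin3_cross(2)[of l "cnj_vec p"] by (simp add: b2_def lin3_commute)
  have "det3 b1 b2 p = - lin3 (cnj_vec p) p"
    using \<open>lin3 l p = 0\<close> l_b1 by (simp add: b2_def det3_cross_middle lin3_commute[of b1])
  then have "det3 b1 b2 p \<noteq> 0"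
    using lin3_cnj_vec_nonzero[OF \<open>p \<noteq> 0\<close>] by (simp add: lin3_commute[of "cnj_vec p"])
  then obtain x y z where det_xyz: "det3 x y z \<noteq> 0"
    and expand: "\<And>v. v = lin3 x v *s b1 + lin3 y v *s b2 + lin3 z v *s p"
    using dual_basis by metis
  have polar_p': "polar ?a u v p = lin3 l u * lin3 l v / 6" for u v
    using polar_p by (metis polar_commute_12 polar_commute_23)
  have "eval3 F v = (lin3 x v)\<^sup>2 * lin3 z v / 2 + polar ?a b1 b1 b1 * (lin3 x v)^3
      + 3 * polar ?a b1 b1 b2 * (lin3 x v)\<^sup>2 * lin3 y v
      + 3 * polar ?a b1 b2 b2 * lin3 x v * (lin3 y v)\<^sup>2 + polar ?a b2 b2 b2 * (lin3 y v)^3"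
    (is "_ = ?rhs v") for v
  proof -
    have "eval3 F v = polar ?a v v v"
      by (simp add: eval3_cubic[OF hom] cubic_value_eq_polar)
    also have "\<dots> = polar ?a (lin3 x v *s b1 + lin3 y v *s b2 + lin3 z v *s p)
        (lin3 x v *s b1 + lin3 y v *s b2 + lin3 z v *s p) (lin3 x v *s b1 + lin3 y v *s b2 + lin3 z v *s p)"
      using arg_cong[OF expand[of v], of "\<lambda>x. polar ?a x x x"] .
    also have "\<dots> = ?rhs v"
      by (simp only: polar_cube_expand) (simp add: polar_p' l_b1 l_b2 \<open>lin3 l p = 0\<close>)
    finally show ?thesis .
  qed
  then show ?thesis
    using that[OF det_xyz] by blast
qed

lemma cubic_completion:
  fixes x y z A B C D :: "'a::field_char_0"
  assumes "D \<noteq> 0"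
  shows "x\<^sup>2 * z / 2 + A * x^3 + 3 * B * x\<^sup>2 * y + 3 * C * x * y\<^sup>2 + D * y^3 =
         x\<^sup>2 * (z + 2 * (A - C^3 / D\<^sup>2) * x + 6 * (B - C\<^sup>2 / D) * y) / 2 + D * (y + C / D * x)^3"
  using assms by (simp add: field_simps power2_eq_square power3_eq_cube)

lemma complete_the_cube:
  fixes f :: "complex^3 \<Rightarrow> complex"
  assumes det_xyz: "det3 x y z \<noteq> 0" and "D \<noteq> 0"
    and f_eq: "\<And>v. f v = (lin3 x v)\<^sup>2 * lin3 z v / 2 + A * (lin3 x v)^3
        + 3 * B * (lin3 x v)\<^sup>2 * lin3 y v + 3 * C * lin3 x v * (lin3 y v)\<^sup>2 + D * (lin3 y v)^3"
  obtains g2 g3 where "det3 x g2 g3 \<noteq> 0"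
    and "\<And>v. f v = (lin3 x v)\<^sup>2 * lin3 g3 v / 2 + D * (lin3 g2 v)^3"
proof -
  define g2 where "g2 = (C / D) *s x + y"
  define g3 where "g3 = (2 * (A - C^3 / D\<^sup>2)) *s x + (6 * (B - C\<^sup>2 / D)) *s y + z"
  have "det3 x g2 g3 = det3 (vec3 1 0 0) (vec3 (C / D) 1 0) (vec3 (2 * (A - C^3 / D\<^sup>2)) (6 * (B - C\<^sup>2 / D)) 1)
                        * det3 x y z"
    unfolding g2_def g3_def
    using det3_vec3_lincomb[of 1 x 0 y 0 z "C / D" 1 0 "2 * (A - C^3 / D\<^sup>2)" "6 * (B - C\<^sup>2 / D)" 1]
    by simp
  also have "\<dots> = det3 x y z"
    by (simp add: det3_def cross_def lin3_expand)
  finally have "det3 x g2 g3 \<noteq> 0"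
    using det_xyz by simp
  moreover have "f v = (lin3 x v)\<^sup>2 * lin3 g3 v / 2 + D * (lin3 g2 v)^3" for v
  proof -
    have "lin3 g2 v = lin3 y v + C / D * lin3 x v"
      "lin3 g3 v = lin3 z v + 2 * (A - C^3 / D\<^sup>2) * lin3 x v + 6 * (B - C\<^sup>2 / D) * lin3 y v"
      by (simp_all add: g2_def g3_def lin3_linear algebra_simps)
    then show ?thesis
      unfolding f_eq by (simp only: cubic_completion[OF \<open>D \<noteq> 0\<close>])
  qed
  ultimately show ?thesis
    using that by metis
qed

lemma cuspidal_cubic_normal_form:
  assumes "cuspidal_cubic F"
  obtains g1 g2 g3 d where "det3 g1 g2 g3 \<noteq> 0"
    and "\<And>v. eval3 F v = (lin3 g1 v)\<^sup>2 * lin3 g3 v / 2 + d * (lin3 g2 v)^3"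
proof -
  obtain p l where hom: "homogeneous3 3 F" and irr: "irreducible F" and "p \<noteq> 0"
    and grad: "\<forall>i. eval3 (pd i F) p = 0" and "l \<noteq> 0"
    and hess: "\<forall>v. (\<Sum>i\<in>UNIV. \<Sum>j\<in>UNIV. eval3 (pd2 i j F) p * v $ i * v $ j) = (lin3 l v)\<^sup>2"
    using assms unfolding cuspidal_cubic_def cubic_form_def by blast
  note polar_p = cusp_polar[OF hom grad hess \<open>l \<noteq> 0\<close>]
  obtain x y z A B C D where det_xyz: "det3 x y z \<noteq> 0"
    and F_eq: "\<And>v. eval3 F v = (lin3 x v)\<^sup>2 * lin3 z v / 2 + A * (lin3 x v)^3
        + 3 * B * (lin3 x v)\<^sup>2 * lin3 y v + 3 * C * lin3 x v * (lin3 y v)\<^sup>2 + D * (lin3 y v)^3"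
    using cusp_coordinates[OF hom polar_p \<open>l \<noteq> 0\<close> \<open>p \<noteq> 0\<close>] by metis
  have "D \<noteq> 0"
  proof
    assume "D = 0"
    let ?w = "(1/2) *s z + A *s x + (3 * B) *s y"
    have "eval3 F v = lin3 x v * (lin3 x v * lin3 ?w v + lin3 y v * lin3 ((3 * C) *s y) v)" for v
      by (simp add: F_eq \<open>D = 0\<close> lin3_linear power2_eq_square power3_eq_cube algebra_simps)
    then show False
      using not_irreducible_cubic_with_linear_factor[OF hom] irr by blast
  qed
  obtain g2 g3 where "det3 x g2 g3 \<noteq> 0"
    and "\<And>v. eval3 F v = (lin3 x v)\<^sup>2 * lin3 g3 v / 2 + D * (lin3 g2 v)^3"
    using complete_the_cube[OF det_xyz \<open>D \<noteq> 0\<close> F_eq] by metis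
  then show ?thesis
    using that by metis
qed

theorem proposition4p2:
  fixes F :: poly3
  assumes "cubic_form F" and "cuspidal_cubic F"
  shows "\<exists>l. star_forms l \<and> apolar (star_points l) F"
proof -
  obtain g1 g2 g3 d where frame: "det3 g1 g2 g3 \<noteq> 0"
    and F_eq: "\<And>v. eval3 F v = (lin3 g1 v)\<^sup>2 * lin3 g3 v / 2 + d * (lin3 g2 v)^3"
    using cuspidal_cubic_normal_form[OF assms(2)] by metis
  obtain l where "star_forms l" and points:
    "g1 + g3 \<in> star_points l" "g1 - g3 \<in> star_points l" "g3 \<in> star_points l" "g2 \<in> star_points l"
    using star_configuration_through_frame[OF frame] by metis
  let ?W = "power_form 3 (1/12) (g1 + g3) + power_form 3 (-1/12) (g1 - g3) + power_form 3 (-1/6) g3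
            + power_form 3 d g2"
  have "F = ?W"
  proof (rule homogeneous3_cubic_eqI)
    show "homogeneous3 3 F"
      using assms(1) by (simp add: cubic_form_def)
    show "homogeneous3 3 ?W"
      by (intro homogeneous3_add homogeneous3_power_form)
    show "eval3 F v = eval3 ?W v" for v
      by (simp add: F_eq eval3_add eval3_power_form_3 lin3_linear field_simps
          power2_eq_square power3_eq_cube)
  qed
  then have "apolar (star_points l) F"
    by (simp add: apolar_add apolar_power_form points)
  with \<open>star_forms l\<close> show ?thesis
    by blast
qed

end
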